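(* Consider the following encoder-assisted communication system over the additive white Gaussian noise (AWGN) channel. The channel is $Y_i = X_i + Z_i$, $i=1,\dots,n$, where $Z_1,\dots,Z_n$ are i.i.d. $\mathcal{N}(0,\sigma^2)$, $\sigma^2>0$. A helper observes the whole noise realization $z^n=(z_1,\dots,z_n)$ (non-causally) and sends to the encoder the index $T(z^n)$, where $T:\mathbb{R}^n\to\{0,1,\dots,e^{nR_{\mathrm{h}}}-1\}$, $R_{\mathrm{h}}\in(0,\infty)$ (help rate, in nats). The message $m$ is uniformly distributed on $\mathcal{M}=\{0,1,\dots,e^{nR}-1\}$ and independent of $Z^n$; the encoder sends $x^n=\phi(m,T(z^n))\in\mathbb{R}^n$, subject to the power constraint $\sum_{i=1}^n \mathbb{E}\{([\phi(m,T(Z^n))]_i)^2\}\le nP$, the expectation being over both $m$ and $Z^n$. The decoder $\psi:\mathbb{R}^n\to\mathcal{M}$ outputs $\hat m=\psi(y^n)$, and the error probability is $P_{\mathrm{e}}(\phi,\psi,T)=\Pr\{\psi(\phi(m,T(Z^n))+Z^n)\neq m\}$. The reliability function is $$E(R)=\limsup_{n\to\infty}\left\{-\frac{1}{n}\log\Big[\inf_{\phi,\psi,T}P_{\mathrm{e}}(\phi,\psi,T)\Big]\right\},$$ the infimum being over all rate-$R$ encoders, their decoders, and rate-$R_{\mathrm{h}}$ helpers. Let $C_0=\frac12\log(1+P/\sigma^2)$ and let $E_{\mathrm{a}}(\cdot)$ be any achievable error exponent function for the same AWGN channel with power $P$ and without help. Then $$E(R)\ge\begin{cases}\infty & R<R_{\mathrm{h}},\\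 E_{\mathrm{a}}(R-R_{\mathrm{h}}) & R_{\mathrm{h}}<R<R_{\mathrm{h}}+C_0,\\ 0 & R\ge R_{\mathrm{h}}+C_0,\end{cases}$$ where the assertion $E(R)\ge\infty$ for $R<R_{\mathrm{h}}$ means that an arbitrarily large error exponent is achievable (i.e., for every $B<\infty$ there exist such schemes whose error probability decays with exponent at least $B$).
   Context: Logarithms are natural (rates in nats per channel use). "An achievable error exponent function $E_{\mathrm{a}}(\cdot)$ for the AWGN channel without help" means a function such that, for each rate $r$, there exist ordinary channel codes (encoder depending only on the message, satisfying the same power constraint $P$) of rate $r$ and decoders whose error probability over $\mathcal{N}(0,\sigma^2)$ i.i.d. noise is at most $e^{-n[E_{\mathrm{a}}(r)-o(1)]}$ as $n\to\infty$ (examples: the random coding exponent or the expurgated exponent of the AWGN channel). *)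

theory Defs
  imports "HOL-Probability.Probability"
begin

text \<open>Noise: n i.i.d. N(0, s2) samples (s2 = variance), vectors of length n are
  functions nat => real on the index set {..<n} (product measure PiM).\<close>

definition noise_measure :: "nat \<Rightarrow> real \<Rightarrow> (nat \<Rightarrow> real) measure" where
  "noise_measure n s2 = PiM {..<n} (\<lambda>_. density lborel (normal_density 0 (sqrt s2)))"

definition vec_space :: "nat \<Rightarrow> (nat \<Rightarrow> real) measure" where
  "vec_space n = PiM {..<n} (\<lambda>_. (borel :: real measure))"

definition set_size :: "nat \<Rightarrow> real \<Rightarrow> nat" where
  "set_size n R = nat \<lceil>exp (real n * R)\<rceil>"

definition received :: "nat \<Rightarrow> (nat \<Rightarrow> real) \<Rightarrow> (nat \<Rightarrow> real) \<Rightarrow> (nat \<Rightarrow> real)" where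
  "received n x z = (\<lambda>i\<in>{..<n}. x i + z i)"

definition helped_code ::
  "nat \<Rightarrow> real \<Rightarrow> real \<Rightarrow> real \<Rightarrow> real \<Rightarrow> (nat \<Rightarrow> nat \<Rightarrow> nat \<Rightarrow> real)
    \<Rightarrow> ((nat \<Rightarrow> real) \<Rightarrow> nat) \<Rightarrow> ((nat \<Rightarrow> real) \<Rightarrow> nat) \<Rightarrow> bool" where
  "helped_code n R Rh P s2 \<phi> \<psi> T \<longleftrightarrow>
     T \<in> measurable (noise_measure n s2) (count_space UNIV) \<and>
     (\<forall>z\<in>space (noise_measure n s2). T z < set_size n Rh) \<and>
     \<psi> \<in> measurable (vec_space n) (count_space UNIV) \<and>
     (\<forall>y. \<psi> y < set_size n R) \<and>
     (1 / real (set_size n R)) * (\<Sum>m<set_size n R.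
        integral\<^sup>L (noise_measure n s2) (\<lambda>z. \<Sum>i<n. (\<phi> m (T z) i)\<^sup>2)) \<le> real n * P"

definition helped_error ::
  "nat \<Rightarrow> real \<Rightarrow> real \<Rightarrow> (nat \<Rightarrow> nat \<Rightarrow> nat \<Rightarrow> real)
    \<Rightarrow> ((nat \<Rightarrow> real) \<Rightarrow> nat) \<Rightarrow> ((nat \<Rightarrow> real) \<Rightarrow> nat) \<Rightarrow> real" where
  "helped_error n R s2 \<phi> \<psi> T =
     (1 / real (set_size n R)) * (\<Sum>m<set_size n R.
        measure (noise_measure n s2)
          {z \<in> space (noise_measure n s2). \<psi> (received n (\<phi> m (T z)) z) \<noteq> m})"

definition opt_helped_error :: "nat \<Rightarrow> real \<Rightarrow> real \<Rightarrow> real \<Rightarrow> real \<Rightarrow> real" where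
  "opt_helped_error n R Rh P s2 =
     Inf ((\<lambda>(\<phi>, \<psi>, T). helped_error n R s2 \<phi> \<psi> T) `
          {(\<phi>, \<psi>, T). helped_code n R Rh P s2 \<phi> \<psi> T})"

definition reliability :: "real \<Rightarrow> real \<Rightarrow> real \<Rightarrow> real \<Rightarrow> ereal" where
  "reliability R Rh P s2 = limsup (\<lambda>n.
      if opt_helped_error n R Rh P s2 = 0 then \<infinity>
      else ereal (- ln (opt_helped_error n R Rh P s2) / real n))"

definition plain_code ::
  "nat \<Rightarrow> real \<Rightarrow> real \<Rightarrow> (nat \<Rightarrow> nat \<Rightarrow> real) \<Rightarrow> ((nat \<Rightarrow> real) \<Rightarrow> nat) \<Rightarrow> bool" where
  "plain_code n r P f \<psi> \<longleftrightarrow>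
     \<psi> \<in> measurable (vec_space n) (count_space UNIV) \<and>
     (\<forall>y. \<psi> y < set_size n r) \<and>
     (1 / real (set_size n r)) * (\<Sum>m<set_size n r. \<Sum>i<n. (f m i)\<^sup>2) \<le> real n * P"

definition plain_error ::
  "nat \<Rightarrow> real \<Rightarrow> real \<Rightarrow> (nat \<Rightarrow> nat \<Rightarrow> real) \<Rightarrow> ((nat \<Rightarrow> real) \<Rightarrow> nat) \<Rightarrow> real" where
  "plain_error n r s2 f \<psi> =
     (1 / real (set_size n r)) * (\<Sum>m<set_size n r.
        measure (noise_measure n s2)
          {z \<in> space (noise_measure n s2). \<psi> (received n (f m) z) \<noteq> m})"

definition achievable_exponent :: "real \<Rightarrow> real \<Rightarrow> (real \<Rightarrow> real) \<Rightarrow> bool" where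
  "achievable_exponent P s2 Ea \<longleftrightarrow>
     (\<forall>r. \<exists>\<epsilon> :: nat \<Rightarrow> real. \<epsilon> \<longlonglongrightarrow> 0 \<and>
        (\<forall>n. \<exists>f \<psi>. plain_code n r P f \<psi> \<and>
               plain_error n r s2 f \<psi> \<le> exp (- real n * (Ea r - \<epsilon> n))))"

definition awgn_capacity :: "real \<Rightarrow> real \<Rightarrow> real" where
  "awgn_capacity P s2 = ln (1 + P / s2) / 2"

end

theory Submission
  imports Defs
begin

text \<open>Split the message into a part \<open>q\<close> of rate \<open>R - Rh\<close> and a part \<open>r\<close> of rate \<open>Rh\<close>.
  The part \<open>q\<close> is sent with a good ordinary code, scaled by \<open>1 - \<eta>\<close> to free some power.
  The helper reports the first noise sample quantized with step \<open>\<Delta>\<close> and reduced modulo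
  \<open>L = e^(n Rh)\<close>; the encoder adds \<open>\<Delta>\<close> times \<open>(r - report) mod L\<close> to the first coordinate, so
  once the ordinary decoder has found its codeword the receiver reads \<open>r\<close> off exactly.
  As \<open>r\<close> ranges over its \<open>L\<close> values the offset ranges over all of them, whatever the helper
  reports; hence the error probability is that of the ordinary code under noise shifted by
  vectors of l1-norm \<open>O(\<eta> + \<Delta>)\<close>, and shifting Gaussian noise by \<open>v\<close> changes probabilities by at
  most \<open>|v|_1 / \<sigma>\<close>.\<close>

section \<open>Shifting Gaussian noise\<close>

lemma nn_integral_lborel_translate:
  fixes f :: "real \<Rightarrow> ennreal"
  assumes "f \<in> borel_measurable borel"
  shows "(\<integral>\<^sup>+x. f (x + t) \<partial>lborel) = (\<integral>\<^sup>+x. f x \<partial>lborel)"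
  using nn_integral_real_affine[OF assms, of 1 t] by (simp add: add.commute)

lemma nn_integral_lborel_reflect:
  fixes f :: "real \<Rightarrow> ennreal"
  assumes "f \<in> borel_measurable borel"
  shows "(\<integral>\<^sup>+x. f (- x) \<partial>lborel) = (\<integral>\<^sup>+x. f x \<partial>lborel)"
  using nn_integral_real_affine[OF assms, of "-1" 0] by simp

lemma normal_density_zero_le:
  assumes "0 < \<sigma>"
  shows "normal_density 0 \<sigma> x \<le> 1 / \<sigma>"
proof -
  have "sqrt (2 * pi * \<sigma>\<^sup>2) = sqrt (2 * pi) * \<sigma>"
    using assms by (simp add: real_sqrt_mult)
  moreover have "1 \<le> sqrt (2 * pi)"
    using pi_gt3 by simp
  ultimately have "\<sigma> \<le> sqrt (2 * pi * \<sigma>\<^sup>2)"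
    using assms by (simp add: mult_le_cancel_right1)
  then have "1 / sqrt (2 * pi * \<sigma>\<^sup>2) * exp (- x\<^sup>2 / (2 * \<sigma>\<^sup>2)) \<le> 1 / \<sigma> * 1"
    using assms by (intro mult_mono) (auto simp: divide_simps)
  then show ?thesis
    by (simp add: normal_density_def)
qed

lemma normal_density_zero_antimono:
  assumes "0 < \<sigma>" and "\<bar>a\<bar> \<le> \<bar>b\<bar>"
  shows "normal_density 0 \<sigma> b \<le> normal_density 0 \<sigma> a"
proof -
  have "a\<^sup>2 \<le> b\<^sup>2"
    using assms(2) by (metis abs_le_square_iff)
  then have "- b\<^sup>2 / (2 * \<sigma>\<^sup>2) \<le> - a\<^sup>2 / (2 * \<sigma>\<^sup>2)"
    using assms(1) by (simp add: divide_right_mono)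
  then show ?thesis
    unfolding normal_density_def using assms(1) by (intro mult_left_mono) auto
qed

lemma normal_density_zero_uminus [simp]: "normal_density 0 \<sigma> (- x) = normal_density 0 \<sigma> x"
  by (simp add: normal_density_def)

lemma nn_integral_normal_density:
  assumes "0 < \<sigma>"
  shows "(\<integral>\<^sup>+x. normal_density 0 \<sigma> x \<partial>lborel) = 1"
proof -
  interpret prob_space "density lborel (normal_density 0 \<sigma>)"
    using prob_space_normal_density[OF assms] .
  show ?thesis
    using emeasure_space_1 by (simp add: emeasure_density)
qed

text \<open>The excess of the shifted density over the centred one is confined to \<open>u > \<delta>/2\<close>,
  and its mass there equals the mass of the centred density on \<open>(-\<delta>/2, \<delta>/2]\<close>.\<close>

lemma nn_integral_normal_shift_le_nonneg:
  fixes \<sigma> \<delta> :: real and H :: "real \<Rightarrow> ennreal"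
  assumes \<sigma>: "0 < \<sigma>" and \<delta>: "0 \<le> \<delta>" and [measurable]: "H \<in> borel_measurable borel"
    and H_le_1: "\<And>u. H u \<le> 1"
  shows "(\<integral>\<^sup>+u. normal_density 0 \<sigma> (u - \<delta>) * H u \<partial>lborel)
     \<le> (\<integral>\<^sup>+u. normal_density 0 \<sigma> u * H u \<partial>lborel) + \<delta> / \<sigma>"
proof -
  define \<phi> where "\<phi> = normal_density 0 \<sigma>"
  have [measurable]: "\<phi> \<in> borel_measurable borel"
    unfolding \<phi>_def by simp
  define D where "D u = ennreal (\<phi> (u - \<delta>) - \<phi> u)" for u
  have [measurable]: "D \<in> borel_measurable borel"
    unfolding D_def by measurable
  have shifted_larger: "\<phi> u \<le> \<phi> (u - \<delta>)" if "\<delta> / 2 < u" for u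
    unfolding \<phi>_def using that \<delta> by (intro normal_density_zero_antimono \<sigma>) auto
  have shifted_smaller: "\<phi> (u - \<delta>) \<le> \<phi> u" if "u \<le> \<delta> / 2" for u
    unfolding \<phi>_def using that \<delta> by (intro normal_density_zero_antimono \<sigma>) auto
  have split: "indicator {\<delta>/2<..} u * ennreal (\<phi> (u - \<delta>))
      = indicator {\<delta>/2<..} u * ennreal (\<phi> u) + indicator {\<delta>/2<..} u * D u" for u
    using shifted_larger[of u] unfolding D_def
    by (cases "\<delta> / 2 < u") (simp_all add: \<phi>_def ennreal_plus[symmetric] del: ennreal_plus)
  have pointwise: "ennreal (\<phi> (u - \<delta>)) * H u \<le> ennreal (\<phi> u) * H u + indicator {\<delta>/2<..} u * D u" for u
  proof (cases "\<delta> / 2 < u")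
    case True
    then have "ennreal (\<phi> (u - \<delta>)) * H u = ennreal (\<phi> u) * H u + D u * H u"
      using split[of u] by (simp add: distrib_right)
    also have "\<dots> \<le> ennreal (\<phi> u) * H u + D u"
      using mult_left_mono[OF H_le_1[of u], of "D u"] by (intro add_left_mono) simp
    finally show ?thesis
      using True by simp
  next
    case False
    then have "ennreal (\<phi> (u - \<delta>)) * H u \<le> ennreal (\<phi> u) * H u"
      using shifted_smaller[of u] by (intro mult_right_mono) (auto intro: ennreal_leI)
    then show ?thesis
      by (simp add: add_increasing2)
  qed
  define a where "a = (\<integral>\<^sup>+u. indicator {\<delta>/2<..} u * ennreal (\<phi> u) \<partial>lborel)"
  define X where "X = (\<integral>\<^sup>+u. indicator {\<delta>/2<..} u * D u \<partial>lborel)"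
  define Y where "Y = (\<integral>\<^sup>+u. indicator {-\<delta>/2<..\<delta>/2} u * ennreal (\<phi> u) \<partial>lborel)"
  have "a + X = (\<integral>\<^sup>+u. indicator {\<delta>/2<..} u * ennreal (\<phi> (u - \<delta>)) \<partial>lborel)"
    unfolding a_def X_def split by (rule nn_integral_add[symmetric]) measurable
  also have "\<dots> = (\<integral>\<^sup>+u. indicator {-\<delta>/2<..} u * ennreal (\<phi> u) \<partial>lborel)"
    by (subst nn_integral_lborel_translate[symmetric, where t = \<delta>])
      (auto intro!: nn_integral_cong simp: indicator_def)
  also have "\<dots> = (\<integral>\<^sup>+u. indicator {\<delta>/2<..} u * ennreal (\<phi> u)
                        + indicator {-\<delta>/2<..\<delta>/2} u * ennreal (\<phi> u) \<partial>lborel)"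
    using \<delta> by (intro nn_integral_cong) (auto simp: indicator_def)
  also have "\<dots> = a + Y"
    unfolding a_def Y_def by (rule nn_integral_add) measurable
  finally have "a + X = a + Y" .
  moreover have "a \<noteq> \<top>"
  proof -
    have "a \<le> (\<integral>\<^sup>+u. ennreal (\<phi> u) \<partial>lborel)"
      unfolding a_def by (intro nn_integral_mono) (auto simp: indicator_def)
    also have "\<dots> = 1"
      unfolding \<phi>_def by (rule nn_integral_normal_density[OF \<sigma>])
    finally show ?thesis
      by (auto simp: top_unique)
  qed
  ultimately have "X = Y"
    by (simp add: ennreal_add_left_cancel)
  also have "Y \<le> (\<integral>\<^sup>+u. ennreal (1 / \<sigma>) * indicator {-\<delta>/2<..\<delta>/2} u \<partial>lborel)"
    unfolding Y_def
    by (intro nn_integral_mono) (auto simp: indicator_def \<phi>_def intro!: ennreal_leI normal_density_zero_le[OF \<sigma>])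
  also have "\<dots> = ennreal (\<delta> / \<sigma>)"
    using \<delta> \<sigma> by (simp add: nn_integral_cmult ennreal_mult[symmetric])
  finally have "X \<le> ennreal (\<delta> / \<sigma>)" .
  have "(\<integral>\<^sup>+u. ennreal (\<phi> (u - \<delta>)) * H u \<partial>lborel)
      \<le> (\<integral>\<^sup>+u. ennreal (\<phi> u) * H u + indicator {\<delta>/2<..} u * D u \<partial>lborel)"
    by (rule nn_integral_mono) (rule pointwise)
  also have "\<dots> = (\<integral>\<^sup>+u. ennreal (\<phi> u) * H u \<partial>lborel) + X"
    unfolding X_def by (rule nn_integral_add) measurable
  also have "\<dots> \<le> (\<integral>\<^sup>+u. ennreal (\<phi> u) * H u \<partial>lborel) + ennreal (\<delta> / \<sigma>)"
    using \<open>X \<le> ennreal (\<delta> / \<sigma>)\<close> by (rule add_left_mono)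
  finally show ?thesis
    unfolding \<phi>_def .
qed

lemma nn_integral_normal_shift_le:
  fixes \<sigma> \<delta> :: real and H :: "real \<Rightarrow> ennreal"
  assumes \<sigma>: "0 < \<sigma>" and [measurable]: "H \<in> borel_measurable borel" and H_le_1: "\<And>u. H u \<le> 1"
  shows "(\<integral>\<^sup>+y. H (y + \<delta>) \<partial>density lborel (normal_density 0 \<sigma>))
     \<le> (\<integral>\<^sup>+y. H y \<partial>density lborel (normal_density 0 \<sigma>)) + \<bar>\<delta>\<bar> / \<sigma>"
proof -
  define \<phi> where "\<phi> = normal_density 0 \<sigma>"
  have [measurable]: "\<phi> \<in> borel_measurable borel"
    unfolding \<phi>_def by simp
  have "(\<integral>\<^sup>+y. H (y + \<delta>) \<partial>density lborel \<phi>) = (\<integral>\<^sup>+y. \<phi> y * H (y + \<delta>) \<partial>lborel)"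
    by (simp add: nn_integral_density)
  also have "\<dots> = (\<integral>\<^sup>+u. \<phi> (u - \<delta>) * H u \<partial>lborel)"
    by (subst nn_integral_lborel_translate[symmetric, where t = \<delta>]) simp_all
  also have "\<dots> \<le> (\<integral>\<^sup>+u. \<phi> u * H u \<partial>lborel) + \<bar>\<delta>\<bar> / \<sigma>"
  proof (cases "0 \<le> \<delta>")
    case True
    then show ?thesis
      unfolding \<phi>_def using nn_integral_normal_shift_le_nonneg[OF \<sigma> True] H_le_1 by simp
  next
    case False
    have [measurable]: "(\<lambda>u. H (- u)) \<in> borel_measurable borel"
      by measurable
    have "\<phi> (- u - \<delta>) = \<phi> (u + \<delta>)" for u
      using normal_density_zero_uminus[of \<sigma> "u + \<delta>"] by (simp add: \<phi>_def)
    then have "(\<integral>\<^sup>+u. \<phi> (u - \<delta>) * H u \<partial>lborel) = (\<integral>\<^sup>+u. \<phi> (u - (- \<delta>)) * H (- u) \<partial>lborel)"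
      by (subst nn_integral_lborel_reflect[symmetric]) simp_all
    also have "\<dots> \<le> (\<integral>\<^sup>+u. \<phi> u * H (- u) \<partial>lborel) + (- \<delta>) / \<sigma>"
      unfolding \<phi>_def using False H_le_1
      by (intro nn_integral_normal_shift_le_nonneg[OF \<sigma>]) simp_all
    also have "(\<integral>\<^sup>+u. \<phi> u * H (- u) \<partial>lborel) = (\<integral>\<^sup>+u. \<phi> u * H u \<partial>lborel)"
      by (subst nn_integral_lborel_reflect[symmetric]) (simp_all add: \<phi>_def)
    finally show ?thesis
      using False by simp
  qed
  also have "(\<integral>\<^sup>+u. \<phi> u * H u \<partial>lborel) = (\<integral>\<^sup>+y. H y \<partial>density lborel \<phi>)"
    by (simp add: nn_integral_density)
  finally show ?thesis
    unfolding \<phi>_def .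
qed

abbreviation noise_sample :: "real \<Rightarrow> real measure" where
  "noise_sample s2 \<equiv> density lborel (normal_density 0 (sqrt s2))"

lemma prob_space_noise_sample: "0 < s2 \<Longrightarrow> prob_space (noise_sample s2)"
  by (rule prob_space_normal_density) simp

lemma space_noise_measure: "space (noise_measure n s2) = PiE {..<n} (\<lambda>_. UNIV)"
  unfolding noise_measure_def by (simp add: space_PiM)

lemma sets_noise_measure: "sets (noise_measure n s2) = sets (vec_space n)"
  unfolding noise_measure_def vec_space_def by (intro sets_PiM_cong) auto

lemma prob_space_noise_measure: "0 < s2 \<Longrightarrow> prob_space (noise_measure n s2)"
  unfolding noise_measure_def by (intro prob_space_PiM prob_space_noise_sample)

lemma measurable_received: "received n v \<in> measurable (noise_measure n s2) (noise_measure n s2)"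
  unfolding received_def noise_measure_def by (rule measurable_restrict) simp

lemma received_in_space: "received n v z \<in> space (noise_measure n s2)"
  unfolding received_def space_noise_measure by auto

lemma received_zero: "z \<in> space (noise_measure n s2) \<Longrightarrow> received n (\<lambda>_. 0) z = z"
  unfolding received_def space_noise_measure by (auto simp: PiE_def extensional_def)

lemma received_received: "received n x (received n v z) = received n (\<lambda>i. x i + v i) z"
  unfolding received_def by (auto simp: add.assoc)

lemma received_preimage_sets:
  "B \<in> sets (noise_measure n s2) \<Longrightarrow>
    {z \<in> space (noise_measure n s2). received n v z \<in> B} \<in> sets (noise_measure n s2)"
  using measurable_sets[OF measurable_received] by (simp add: vimage_def Int_def conj_commute)

text \<open>Fubini in the shifted coordinate reduces this to the one-dimensional shift bound.\<close>

lemma emeasure_received_shift_coordinate_le: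
  assumes s2: "0 < s2" and k: "k < n" and B: "B \<in> sets (noise_measure n s2)"
  shows "emeasure (noise_measure n s2)
      {z \<in> space (noise_measure n s2). received n (\<lambda>i. if i = k then \<delta> else 0) z \<in> B}
    \<le> emeasure (noise_measure n s2) B + \<bar>\<delta>\<bar> / sqrt s2"
proof -
  interpret product_prob_space "\<lambda>_. noise_sample s2" "{}"
    by (intro product_prob_space.intro product_sigma_finite.intro product_prob_space_axioms.intro)
      (auto intro: prob_space_imp_sigma_finite prob_space_noise_sample[OF s2])
  define I where "I = {..<n} - {k}"
  have I: "finite I" "k \<notin> I" and insert_I: "insert k I = {..<n}"
    using k by (auto simp: I_def)
  let ?N = "noise_measure n s2" and ?PI = "PiM I (\<lambda>_. noise_sample s2)"
  have N_eq: "?N = PiM (insert k I) (\<lambda>_. noise_sample s2)"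
    unfolding noise_measure_def insert_I ..
  interpret PI: prob_space ?PI
    by (intro prob_space_PiM prob_space_noise_sample[OF s2])
  define e where "e = (\<lambda>i::nat. if i = k then \<delta> else 0)"
  define S where "S = {z \<in> space ?N. received n e z \<in> B}"
  have S: "S \<in> sets ?N"
    unfolding S_def by (rule received_preimage_sets[OF B])
  define H where "H y = (\<integral>\<^sup>+x. indicator B (x(k := y)) \<partial>?PI)" for y
  have "B \<in> sets (PiM (insert k I) (\<lambda>_. noise_sample s2))"
    using B N_eq by simp
  then have [measurable]: "H \<in> borel_measurable borel"
    unfolding H_def by measurable
  have H_le_1: "H y \<le> 1" for y
  proof -
    have "H y \<le> (\<integral>\<^sup>+x. 1 \<partial>?PI)"
      unfolding H_def by (intro nn_integral_mono) (auto simp: indicator_def)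
    then show ?thesis
      by (simp add: PI.emeasure_space_1)
  qed
  have fubini: "emeasure ?N A = (\<integral>\<^sup>+y. (\<integral>\<^sup>+x. indicator A (x(k := y)) \<partial>?PI) \<partial>noise_sample s2)"
    if "A \<in> sets ?N" for A
    using that unfolding N_eq
    by (simp add: product_nn_integral_insert_rev[OF I] flip: nn_integral_indicator)
  have "emeasure ?N S = (\<integral>\<^sup>+y. H (y + \<delta>) \<partial>noise_sample s2)"
    unfolding fubini[OF S] H_def
  proof (intro nn_integral_cong)
    fix y x assume "x \<in> space ?PI"
    then have x: "x \<in> PiE I (\<lambda>_. UNIV)"
      by (simp add: space_PiM)
    have "x(k := y) \<in> space ?N"
      using x k unfolding space_noise_measure I_def by (auto simp: PiE_def extensional_def)
    moreover have "received n e (x(k := y)) = x(k := y + \<delta>)"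
      using x k unfolding received_def e_def I_def by (auto simp: PiE_def extensional_def)
    ultimately show "indicator S (x(k := y)) = indicator B (x(k := y + \<delta>))"
      unfolding S_def by (simp add: indicator_def)
  qed
  also have "\<dots> \<le> (\<integral>\<^sup>+y. H y \<partial>noise_sample s2) + \<bar>\<delta>\<bar> / sqrt s2"
    using s2 H_le_1 by (intro nn_integral_normal_shift_le) simp_all
  also have "(\<integral>\<^sup>+y. H y \<partial>noise_sample s2) = emeasure ?N B"
    unfolding fubini[OF B] H_def ..
  finally show ?thesis
    unfolding S_def e_def .
qed

lemma emeasure_received_shift_le:
  assumes s2: "0 < s2" and B: "B \<in> sets (noise_measure n s2)"
  shows "emeasure (noise_measure n s2) {z \<in> space (noise_measure n s2). received n v z \<in> B}
    \<le> emeasure (noise_measure n s2) B + (\<Sum>i<n. \<bar>v i\<bar>) / sqrt s2"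
proof -
  let ?N = "noise_measure n s2"
  define v' where "v' k = (\<lambda>i. if i < k then v i else 0)" for k
  have partial_shift: "emeasure ?N {z \<in> space ?N. received n (v' k) z \<in> B}
      \<le> emeasure ?N B + (\<Sum>i<k. \<bar>v i\<bar>) / sqrt s2" if "k \<le> n" "B \<in> sets ?N" for k B
    using that
  proof (induction k arbitrary: B)
    case 0
    then have "{z \<in> space ?N. received n (v' 0) z \<in> B} = B"
      using sets.sets_into_space[OF 0(2)] received_zero[of _ n s2] by (auto simp: v'_def)
    then show ?case
      by simp
  next
    case (Suc k)
    define e where "e i = (if i = k then v k else 0)" for i
    define B' where "B' = {w \<in> space ?N. received n e w \<in> B}"
    have B': "B' \<in> sets ?N"
      unfolding B'_def by (rule received_preimage_sets[OF Suc.prems(2)])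
    have "received n e (received n (v' k) z) = received n (v' (Suc k)) z" for z
      unfolding received_received by (rule arg_cong[of _ _ "\<lambda>x. received n x z"]) (auto simp: e_def v'_def fun_eq_iff less_Suc_eq)
    then have "{z \<in> space ?N. received n (v' (Suc k)) z \<in> B} = {z \<in> space ?N. received n (v' k) z \<in> B'}"
      unfolding B'_def using received_in_space by auto
    also have "emeasure ?N \<dots> \<le> emeasure ?N B' + (\<Sum>i<k. \<bar>v i\<bar>) / sqrt s2"
      using Suc B' by simp
    also have "emeasure ?N B' \<le> emeasure ?N B + \<bar>v k\<bar> / sqrt s2"
      unfolding B'_def e_def using Suc by (intro emeasure_received_shift_coordinate_le s2) auto
    also have "emeasure ?N B + ennreal (\<bar>v k\<bar> / sqrt s2) + ennreal ((\<Sum>i<k. \<bar>v i\<bar>) / sqrt s2)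
        = emeasure ?N B + ennreal ((\<Sum>i<Suc k. \<bar>v i\<bar>) / sqrt s2)"
      unfolding add.assoc using s2
      by (subst ennreal_plus[symmetric])
        (auto simp: sum_nonneg add_divide_distrib add.commute intro!: divide_nonneg_nonneg)
    finally show ?case
      by (simp add: add_right_mono)
  qed
  have "received n (v' n) = received n v"
    unfolding received_def v'_def by (intro ext) (simp add: restrict_def)
  then show ?thesis
    using partial_shift[OF order_refl B] by simp
qed

lemma measure_received_shift_le:
  assumes s2: "0 < s2" and B: "B \<in> sets (noise_measure n s2)"
  shows "measure (noise_measure n s2) {z \<in> space (noise_measure n s2). received n v z \<in> B}
    \<le> measure (noise_measure n s2) B + (\<Sum>i<n. \<bar>v i\<bar>) / sqrt s2"
proof -
  interpret prob_space "noise_measure n s2"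
    by (rule prob_space_noise_measure[OF s2])
  have "0 \<le> (\<Sum>i<n. \<bar>v i\<bar>) / sqrt s2"
    using s2 by (intro divide_nonneg_nonneg sum_nonneg) auto
  then show ?thesis
    using emeasure_received_shift_le[OF s2 B, of v] received_preimage_sets[OF B, of v] B
    by (simp add: emeasure_eq_measure ennreal_plus[symmetric] del: ennreal_plus)
qed

section \<open>Message-set sizes and finite sums\<close>

lemma set_size_pos: "0 < set_size n r"
proof -
  have "1 \<le> \<lceil>exp (real n * r)\<rceil>"
    by (simp add: le_ceiling_iff)
  then show ?thesis
    unfolding set_size_def by linarith
qed

lemma real_set_size: "real (set_size n r) = real_of_int \<lceil>exp (real n * r)\<rceil>"
  unfolding set_size_def by (simp add: ceiling_mono[OF exp_ge_zero, simplified])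

lemma exp_le_set_size: "exp (real n * r) \<le> real (set_size n r)"
  unfolding real_set_size by (rule le_of_int_ceiling)

lemma set_size_less: "real (set_size n r) < exp (real n * r) + 1"
  unfolding real_set_size by linarith

lemma set_size_nonpos:
  assumes "r \<le> 0"
  shows "set_size n r = 1"
proof -
  have "exp (real n * r) \<le> 1"
    using assms by (simp add: mult_nonneg_nonpos)
  then have "\<lceil>exp (real n * r)\<rceil> = 1"
    by (intro ceiling_unique) auto
  then show ?thesis
    unfolding set_size_def by simp
qed

lemma set_size_add_le: "set_size n (r + r') \<le> set_size n r * set_size n r'"
proof -
  have "exp (real n * (r + r')) = exp (real n * r) * exp (real n * r')"
    by (simp add: distrib_left exp_add)
  also have "\<dots> \<le> real (set_size n r * set_size n r')"
    by (simp add: exp_le_set_size mult_mono)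
  finally have "\<lceil>exp (real n * (r + r'))\<rceil> \<le> int (set_size n r * set_size n r')"
    by (metis ceiling_le_iff of_int_of_nat_eq)
  then show ?thesis
    unfolding set_size_def[of n "r + r'"] by (simp only: nat_le_iff)
qed

lemma set_size_mult_le:
  assumes "0 \<le> r" and "0 \<le> r'"
  shows "real (set_size n r * set_size n r') \<le> 4 * real (set_size n (r + r'))"
proof -
  have "real (set_size n x) \<le> 2 * exp (real n * x)" if "0 \<le> x" for x
  proof -
    have "1 \<le> exp (real n * x)"
      using that by simp
    then show ?thesis
      using set_size_less[of n x] by linarith
  qed
  then have "real (set_size n r) * real (set_size n r') \<le> (2 * exp (real n * r)) * (2 * exp (real n * r'))"
    using assms by (intro mult_mono) auto
  also have "\<dots> = 4 * exp (real n * (r + r'))"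
    by (simp add: distrib_left exp_add)
  also have "\<dots> \<le> 4 * real (set_size n (r + r'))"
    using exp_le_set_size by simp
  finally show ?thesis
    by simp
qed

lemma sum_lessThan_rotate:
  fixes g :: "nat \<Rightarrow> 'a::comm_monoid_add" and c :: int
  assumes "0 < K"
  shows "(\<Sum>i<K. g (nat ((int i + c) mod int K))) = (\<Sum>i<K. g i)"
proof (rule sum.reindex_bij_witness[where i = "\<lambda>j. nat ((int j - c) mod int K)"
      and j = "\<lambda>i. nat ((int i + c) mod int K)"])
  fix i assume "i \<in> {..<K}"
  then show "nat ((int (nat ((int i - c) mod int K)) + c) mod int K) = i"
    using assms by (simp add: mod_add_left_eq)
next
  fix i assume "i \<in> {..<K}"
  then show "nat ((int (nat ((int i + c) mod int K)) - c) mod int K) = i"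
    using assms by (simp add: mod_diff_left_eq)
qed (use assms in \<open>auto simp: nat_less_iff\<close>)

lemma exists_rotation_sum_le:
  fixes p :: "nat \<Rightarrow> real" and g :: "nat \<Rightarrow> nat"
  assumes "0 < K"
  shows "\<exists>s<K. (\<Sum>m<M. p ((s + g m) mod K)) \<le> real M / real K * (\<Sum>c<K. p c)"
proof (rule ccontr)
  assume "\<not> ?thesis"
  then have "(\<Sum>s<K. real M / real K * (\<Sum>c<K. p c)) < (\<Sum>s<K. \<Sum>m<M. p ((s + g m) mod K))"
    using assms by (intro sum_strict_mono) (auto simp: not_le)
  also have "\<dots> = (\<Sum>m<M. \<Sum>s<K. p (nat ((int s + int (g m)) mod int K)))"
    by (subst sum.swap) (simp add: nat_mod_distrib nat_add_distrib)
  also have "\<dots> = (\<Sum>s<K. real M / real K * (\<Sum>c<K. p c))"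
    using assms by (simp add: sum_lessThan_rotate)
  finally show False
    by simp
qed

lemma sum_sq_perturb_first_le:
  fixes x :: "nat \<Rightarrow> real"
  assumes "0 \<le> a" "a \<le> 1" "0 \<le> d"
  shows "(\<Sum>i<n. (a * x i + (if i = 0 then d else 0))\<^sup>2) \<le> a * (\<Sum>i<n. (x i)\<^sup>2) + 2 * \<bar>x 0\<bar> * d + d\<^sup>2"
proof -
  have "(\<Sum>i<n. (a * x i + (if i = 0 then d else 0))\<^sup>2)
      = (\<Sum>i<n. (a * x i)\<^sup>2) + (\<Sum>i<n. if i = 0 then 2 * (a * x 0) * d + d\<^sup>2 else 0)"
    by (subst sum.distrib[symmetric]) (auto intro!: sum.cong simp: power2_eq_square algebra_simps)
  also have "(\<Sum>i<n. (a * x i)\<^sup>2) \<le> (\<Sum>i<n. a * (x i)\<^sup>2)"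
  proof (intro sum_mono)
    fix i
    have "a * (x i)\<^sup>2 \<le> (x i)\<^sup>2"
      using assms by (intro mult_left_le_one_le) auto
    then have "a * (a * (x i)\<^sup>2) \<le> a * (x i)\<^sup>2"
      using assms by (intro mult_left_mono) auto
    then show "(a * x i)\<^sup>2 \<le> a * (x i)\<^sup>2"
      by (simp add: power2_eq_square algebra_simps)
  qed
  also have "(\<Sum>i<n. if i = 0 then 2 * (a * x 0) * d + d\<^sup>2 else 0) \<le> 2 * \<bar>x 0\<bar> * d + d\<^sup>2"
  proof -
    have "a * x 0 * d \<le> \<bar>x 0\<bar> * d"
      using assms by (intro mult_right_mono) (auto simp: abs_if mult_left_le_one_le mult_nonneg_nonpos order_trans[of _ 0])
    moreover have "0 \<le> 2 * \<bar>x 0\<bar> * d + d\<^sup>2"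
      using assms by simp
    ultimately show ?thesis
      by (simp add: sum.delta')
  qed
  finally show ?thesis
    by (simp add: sum_distrib_left)
qed

lemma sum_abs_perturb_first_le:
  fixes x :: "nat \<Rightarrow> real"
  shows "(\<Sum>i<n. \<bar>x i + (if i = 0 then d else 0)\<bar>) \<le> (\<Sum>i<n. \<bar>x i\<bar>) + \<bar>d\<bar>"
proof -
  have "(\<Sum>i<n. \<bar>x i + (if i = 0 then d else 0)\<bar>) \<le> (\<Sum>i<n. \<bar>x i\<bar> + (if i = 0 then \<bar>d\<bar> else 0))"
    by (intro sum_mono) (auto intro: abs_triangle_ineq)
  also have "\<dots> \<le> (\<Sum>i<n. \<bar>x i\<bar>) + \<bar>d\<bar>"
    by (simp add: sum.distrib sum.delta')
  finally show ?thesis .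
qed

lemma sum_measure_eq_integral_indicator:
  assumes "finite_measure M" "finite J" "\<And>j. j \<in> J \<Longrightarrow> A j \<in> sets M"
  shows "(\<Sum>j\<in>J. measure M (A j)) = (\<integral>z. (\<Sum>j\<in>J. indicator (A j) z :: real) \<partial>M)"
proof -
  interpret finite_measure M by fact
  show ?thesis
    using assms(2,3) by (simp add: Bochner_Integration.integral_sum emeasure_eq_measure)
qed

lemma sum_lessThan_mult_split:
  fixes g :: "nat \<Rightarrow> 'a::comm_monoid_add"
  shows "(\<Sum>m<K * L. g m) = (\<Sum>q<K. \<Sum>r<L. g (q * L + r))"
proof -
  have "(\<Sum>m\<in>{q * L..<q * L + L}. g m) = (\<Sum>r<L. g (q * L + r))" for q
    using sum.shift_bounds_nat_ivl[of g 0 "q * L" L] by (simp add: atLeast0LessThan add.commute)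
  then show ?thesis
    using sum.nat_group[of g L K] by simp
qed

section \<open>Codes with a helper\<close>

lemma helped_error_nonneg: "0 \<le> helped_error n R s2 \<phi> \<psi> T"
  unfolding helped_error_def by (intro mult_nonneg_nonneg sum_nonneg) auto

lemma opt_helped_error_le_helped_error:
  assumes "helped_code n R Rh P s2 \<phi> \<psi> T"
  shows "opt_helped_error n R Rh P s2 \<le> helped_error n R s2 \<phi> \<psi> T"
  unfolding opt_helped_error_def
proof (rule cInf_lower)
  show "helped_error n R s2 \<phi> \<psi> T
      \<in> (\<lambda>(\<phi>, \<psi>, T). helped_error n R s2 \<phi> \<psi> T) ` {(\<phi>, \<psi>, T). helped_code n R Rh P s2 \<phi> \<psi> T}"
    using assms by (intro image_eqI[where x = "(\<phi>, \<psi>, T)"]) auto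
  show "bdd_below ((\<lambda>(\<phi>, \<psi>, T). helped_error n R s2 \<phi> \<psi> T) ` {(\<phi>, \<psi>, T). helped_code n R Rh P s2 \<phi> \<psi> T})"
    by (rule bdd_belowI[where m = 0]) (auto simp: helped_error_nonneg)
qed

lemma helped_code_silent:
  assumes "0 \<le> P"
  shows "helped_code n R Rh P s2 (\<lambda>m t i. 0) (\<lambda>y. 0) (\<lambda>z. 0)"
  unfolding helped_code_def using assms set_size_pos[of n Rh] set_size_pos[of n R] by auto

lemma opt_helped_error_nonneg:
  assumes "0 \<le> P"
  shows "0 \<le> opt_helped_error n R Rh P s2"
  unfolding opt_helped_error_def
  using helped_code_silent[OF assms, of n R Rh s2] by (intro cInf_greatest) (auto simp: helped_error_nonneg)

lemma opt_helped_error_le_1: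
  assumes s2: "0 < s2" and P: "0 \<le> P"
  shows "opt_helped_error n R Rh P s2 \<le> 1"
proof -
  interpret prob_space "noise_measure n s2"
    by (rule prob_space_noise_measure[OF s2])
  have "helped_error n R s2 (\<lambda>m t i. 0) (\<lambda>y. 0) (\<lambda>z. 0) \<le> (1 / set_size n R) * (\<Sum>m<set_size n R. 1)"
    unfolding helped_error_def by (intro mult_left_mono sum_mono prob_le_1) auto
  also have "\<dots> = 1"
    using set_size_pos[of n R] by simp
  finally show ?thesis
    using opt_helped_error_le_helped_error[OF helped_code_silent[OF P, of n R Rh s2]] by linarith
qed

lemma plain_error_nonneg: "0 \<le> plain_error n r s2 f \<psi>"
  unfolding plain_error_def by (intro mult_nonneg_nonneg sum_nonneg) auto

locale helper_scheme =
  fixes n :: nat and s2 R Rh :: real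
    and f :: "nat \<Rightarrow> nat \<Rightarrow> real" and \<psi> :: "(nat \<Rightarrow> real) \<Rightarrow> nat"
    and s :: nat and \<eta> \<Delta> :: real
  assumes n_pos: "0 < n" and s2_pos: "0 < s2" and \<Delta>_pos: "0 < \<Delta>"
    and \<psi>_measurable: "\<psi> \<in> measurable (vec_space n) (count_space UNIV)"
begin

abbreviation K where "K \<equiv> set_size n (R - Rh)"
abbreviation L where "L \<equiv> set_size n Rh"
abbreviation M where "M \<equiv> set_size n R"
abbreviation N where "N \<equiv> noise_measure n s2"

definition helper :: "(nat \<Rightarrow> real) \<Rightarrow> nat" where
  "helper z = nat (\<lfloor>z 0 / \<Delta>\<rfloor> mod int L)"

definition codeword :: "nat \<Rightarrow> nat" where
  "codeword m = (s + m div L) mod K"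

definition offset :: "nat \<Rightarrow> nat \<Rightarrow> nat" where
  "offset m t = nat ((int (m mod L) - int t) mod int L)"

definition encoder :: "nat \<Rightarrow> nat \<Rightarrow> nat \<Rightarrow> real" where
  "encoder m t i = (1 - \<eta>) * f (codeword m) i + (if i = 0 then \<Delta> * real (offset m t) else 0)"

definition decoder :: "(nat \<Rightarrow> real) \<Rightarrow> nat" where
  "decoder y =
    (let c = \<psi> y;
         m = nat ((int c - int s) mod int K) * L + nat (\<lfloor>(y 0 - (1 - \<eta>) * f c 0) / \<Delta>\<rfloor> mod int L)
     in if m < M then m else 0)"

definition perturbation :: "nat \<Rightarrow> nat \<Rightarrow> nat \<Rightarrow> real" where
  "perturbation c j i = - \<eta> * f c i + (if i = 0 then \<Delta> * real j else 0)"

definition plain_error_event :: "nat \<Rightarrow> (nat \<Rightarrow> real) set" where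
  "plain_error_event c = {z \<in> space N. \<psi> (received n (f c) z) \<noteq> c}"

lemma prob_space_noise: "prob_space N"
  by (rule prob_space_noise_measure[OF s2_pos])

lemma first_coordinate_measurable: "(\<lambda>z. z 0) \<in> borel_measurable (vec_space n)"
  unfolding vec_space_def using n_pos by (intro measurable_component_singleton) auto

lemma helper_measurable: "helper \<in> measurable N (count_space UNIV)"
proof -
  have "(\<lambda>z. z 0) \<in> borel_measurable N"
    using first_coordinate_measurable by (simp add: measurable_cong_sets[OF sets_noise_measure refl])
  then show ?thesis
    unfolding helper_def by measurable
qed

lemma helper_less: "helper z < L"
  unfolding helper_def using set_size_pos[of n Rh] by (simp add: nat_less_iff)

lemma codeword_less: "codeword m < K"
  unfolding codeword_def using set_size_pos[of n "R - Rh"] by simp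

lemma offset_less: "offset m t < L"
  unfolding offset_def using set_size_pos[of n Rh] by (simp add: nat_less_iff)

lemma decoder_measurable: "decoder \<in> measurable (vec_space n) (count_space UNIV)"
proof -
  have "(\<lambda>y. let m = nat ((int c - int s) mod int K) * L
          + nat (\<lfloor>(y 0 - (1 - \<eta>) * f c 0) / \<Delta>\<rfloor> mod int L) in if m < M then m else 0)
      \<in> measurable (vec_space n) (count_space UNIV)" for c
    using first_coordinate_measurable unfolding Let_def by measurable
  from measurable_compose_countable[OF this \<psi>_measurable] show ?thesis
    unfolding decoder_def Let_def .
qed

lemma decoder_less: "decoder y < M"
  unfolding decoder_def using set_size_pos[of n R] by (simp add: Let_def)

lemma decoder_correct:
  assumes m: "m < M" and decoded: "\<psi> (received n (encoder m (helper z)) z) = codeword m"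
  shows "decoder (received n (encoder m (helper z)) z) = m"
proof -
  define y where "y = received n (encoder m (helper z)) z"
  define k where "k = \<lfloor>z 0 / \<Delta>\<rfloor>"
  have L: "0 < L"
    using set_size_pos by auto
  have "m div L < K"
    using m set_size_add_le[of n Rh "R - Rh"] by (simp add: less_mult_imp_div_less less_le_trans mult.commute)
  then have block: "nat ((int (codeword m) - int s) mod int K) = m div L"
    unfolding codeword_def by (simp add: zmod_int mod_diff_left_eq)
  have "(y 0 - (1 - \<eta>) * f (codeword m) 0) / \<Delta> = z 0 / \<Delta> + real (offset m (helper z))"
    unfolding y_def received_def encoder_def using n_pos \<Delta>_pos by (simp add: field_simps)
  then have "\<lfloor>(y 0 - (1 - \<eta>) * f (codeword m) 0) / \<Delta>\<rfloor> = k + int (offset m (helper z))"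
    unfolding k_def by simp
  also have "int (offset m (helper z)) = (int (m mod L) - k mod int L) mod int L"
    unfolding offset_def helper_def k_def using L by simp
  finally have "\<lfloor>(y 0 - (1 - \<eta>) * f (codeword m) 0) / \<Delta>\<rfloor> mod int L = int (m mod L)"
    using L by (simp add: mod_add_right_eq mod_diff_right_eq zmod_int)
  then show ?thesis
    using decoded block m unfolding decoder_def y_def[symmetric] by (simp add: Let_def div_mult_mod_eq)
qed

lemma received_encoder:
  "received n (encoder m t) z = received n (f (codeword m)) (received n (perturbation (codeword m) (offset m t)) z)"
  unfolding received_received encoder_def perturbation_def by (simp add: algebra_simps)

lemma sum_sq_encoder_le:
  assumes "0 \<le> \<eta>" "\<eta> \<le> 1" "\<Delta> \<le> 1"
  shows "(\<Sum>i<n. (encoder m t i)\<^sup>2)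
    \<le> (1 - \<eta>) * (\<Sum>i<n. (f (codeword m) i)\<^sup>2) + \<Delta> * (2 * L * \<bar>f (codeword m) 0\<bar> + L\<^sup>2)"
proof -
  define d where "d = \<Delta> * real (offset m t)"
  have d: "0 \<le> d" "d \<le> \<Delta> * L"
    unfolding d_def using \<Delta>_pos offset_less[of m t] by auto
  have "(\<Sum>i<n. (encoder m t i)\<^sup>2)
      \<le> (1 - \<eta>) * (\<Sum>i<n. (f (codeword m) i)\<^sup>2) + 2 * \<bar>f (codeword m) 0\<bar> * d + d\<^sup>2"
    unfolding encoder_def d_def[symmetric] using assms d by (intro sum_sq_perturb_first_le) auto
  also have "2 * \<bar>f (codeword m) 0\<bar> * d \<le> \<Delta> * (2 * L * \<bar>f (codeword m) 0\<bar>)"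
    using mult_left_mono[OF d(2) abs_ge_zero[of "f (codeword m) 0"]] by (simp add: algebra_simps)
  also have "d\<^sup>2 \<le> \<Delta> * L\<^sup>2"
  proof -
    have "d\<^sup>2 \<le> (\<Delta> * L)\<^sup>2"
      using d by (intro power_mono) auto
    also have "\<dots> = \<Delta> * (\<Delta> * L\<^sup>2)"
      by (simp add: power2_eq_square)
    also have "\<dots> \<le> \<Delta> * L\<^sup>2"
      using \<Delta>_pos assms(3) by (intro mult_left_mono mult_left_le_one_le) auto
    finally show ?thesis .
  qed
  finally show ?thesis
    by (simp add: algebra_simps)
qed

lemma helped_code_scheme:
  fixes G P :: real
  assumes \<eta>: "0 \<le> \<eta>" "\<eta> \<le> 1" and \<Delta>: "\<Delta> \<le> 1"
    and f0: "\<And>c. c < K \<Longrightarrow> \<bar>f c 0\<bar> \<le> G"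
    and small: "\<Delta> * (2 * L * G + L\<^sup>2) \<le> \<eta> * (n * P)"
    and power: "(\<Sum>m<M. \<Sum>i<n. (f (codeword m) i)\<^sup>2) \<le> M * (n * P)"
  shows "helped_code n R Rh P s2 encoder decoder helper"
proof -
  interpret prob_space N
    by (rule prob_space_noise)
  define bound where "bound m = (1 - \<eta>) * (\<Sum>i<n. (f (codeword m) i)\<^sup>2) + \<eta> * (n * P)" for m
  have pointwise: "(\<Sum>i<n. (encoder m t i)\<^sup>2) \<le> bound m" for m t
  proof -
    have "\<bar>f (codeword m) 0\<bar> \<le> G"
      by (intro f0 codeword_less)
    then have "\<Delta> * (2 * L * \<bar>f (codeword m) 0\<bar> + L\<^sup>2) \<le> \<eta> * (n * P)"
      using \<Delta>_pos by (intro order_trans[OF _ small] mult_left_mono) (auto intro: mult_left_mono)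
    then show ?thesis
      unfolding bound_def using sum_sq_encoder_le[OF \<eta> \<Delta>, of m t] by linarith
  qed
  have "integral\<^sup>L N (\<lambda>z. \<Sum>i<n. (encoder m (helper z) i)\<^sup>2) \<le> bound m" for m
  proof (rule integral_le_const)
    have "(\<lambda>z. \<Sum>i<n. (encoder m (helper z) i)\<^sup>2) \<in> borel_measurable N"
      using measurable_compose[OF helper_measurable, of "\<lambda>t. \<Sum>i<n. (encoder m t i)\<^sup>2" borel] by simp
    then show "integrable N (\<lambda>z. \<Sum>i<n. (encoder m (helper z) i)\<^sup>2)"
      using pointwise by (intro integrable_const_bound[where B = "bound m"]) (auto simp: sum_nonneg)
  qed (use pointwise in auto)
  then have "(\<Sum>m<M. integral\<^sup>L N (\<lambda>z. \<Sum>i<n. (encoder m (helper z) i)\<^sup>2)) \<le> (\<Sum>m<M. bound m)"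
    by (rule sum_mono)
  also have "\<dots> = (1 - \<eta>) * (\<Sum>m<M. \<Sum>i<n. (f (codeword m) i)\<^sup>2) + M * (\<eta> * (n * P))"
    unfolding bound_def by (simp add: sum.distrib sum_distrib_left)
  also have "\<dots> \<le> (1 - \<eta>) * (M * (n * P)) + M * (\<eta> * (n * P))"
    using \<eta> power by (intro add_right_mono mult_left_mono) auto
  also have "\<dots> = M * (n * P)"
    by (simp add: algebra_simps)
  finally have "(1 / M) * (\<Sum>m<M. integral\<^sup>L N (\<lambda>z. \<Sum>i<n. (encoder m (helper z) i)\<^sup>2)) \<le> n * P"
    using set_size_pos[of n R] by (simp add: field_simps)
  then show ?thesis
    unfolding helped_code_def using helper_measurable helper_less decoder_measurable decoder_less
    by (auto simp: less_le_trans)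
qed

definition codeword_error_event :: "nat \<Rightarrow> (nat \<Rightarrow> real) set" where
  "codeword_error_event m = {z \<in> space N. \<psi> (received n (encoder m (helper z)) z) \<noteq> codeword m}"

lemma \<psi>_measurable_noise: "\<psi> \<in> measurable N (count_space UNIV)"
  using \<psi>_measurable by (simp add: measurable_cong_sets[OF sets_noise_measure refl])

lemma plain_error_event_sets: "plain_error_event c \<in> sets N"
proof -
  have "(\<lambda>z. \<psi> (received n (f c) z)) \<in> measurable N (count_space UNIV)"
    using measurable_received \<psi>_measurable_noise by (rule measurable_compose)
  from measurable_sets[OF this, of "- {c}"] show ?thesis
    unfolding plain_error_event_def by (simp add: vimage_def Int_def conj_commute)
qed

lemma codeword_error_event_sets: "codeword_error_event m \<in> sets N"
proof -
  have "(\<lambda>z. \<psi> (received n (encoder m t) z)) \<in> measurable N (count_space UNIV)" for t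
    using measurable_received \<psi>_measurable_noise by (rule measurable_compose)
  from measurable_compose_countable[OF this helper_measurable]
  have "(\<lambda>z. \<psi> (received n (encoder m (helper z)) z)) \<in> measurable N (count_space UNIV)" .
  from measurable_sets[OF this, of "- {codeword m}"] show ?thesis
    unfolding codeword_error_event_def by (simp add: vimage_def Int_def conj_commute)
qed

lemma measure_perturbed_error_le:
  assumes "0 \<le> \<eta>"
  shows "measure N {z \<in> space N. received n (perturbation c j) z \<in> plain_error_event c}
    \<le> measure N (plain_error_event c) + (\<eta> * (\<Sum>i<n. \<bar>f c i\<bar>) + \<Delta> * j) / sqrt s2"
proof -
  have "(\<Sum>i<n. \<bar>perturbation c j i\<bar>) \<le> (\<Sum>i<n. \<bar>- \<eta> * f c i\<bar>) + \<bar>\<Delta> * j\<bar>"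
    unfolding perturbation_def by (rule sum_abs_perturb_first_le)
  also have "\<dots> = \<eta> * (\<Sum>i<n. \<bar>f c i\<bar>) + \<Delta> * j"
    using assms \<Delta>_pos by (simp add: abs_mult sum_distrib_left)
  finally have "(\<Sum>i<n. \<bar>perturbation c j i\<bar>) / sqrt s2 \<le> (\<eta> * (\<Sum>i<n. \<bar>f c i\<bar>) + \<Delta> * j) / sqrt s2"
    by (rule divide_right_mono) (use s2_pos in simp)
  then show ?thesis
    using measure_received_shift_le[OF s2_pos plain_error_event_sets[of c], of "perturbation c j"] by linarith
qed

text \<open>Within a block of \<open>L\<close> messages sharing a codeword, the offsets run through all of
  \<open>{..<L}\<close> whatever the helper reports, so the helper index drops out of the block's error.\<close>

lemma sum_block_codeword_error:
  "(\<Sum>r<L. measure N (codeword_error_event (q * L + r)))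
    = (\<Sum>j<L. measure N
        {z \<in> space N. received n (perturbation ((s + q) mod K) j) z \<in> plain_error_event ((s + q) mod K)})"
proof -
  define c where "c = (s + q) mod K"
  define W where "W j = {z \<in> space N. received n (perturbation c j) z \<in> plain_error_event c}" for j
  have L: "0 < L"
    using set_size_pos by auto
  have W_sets: "W j \<in> sets N" for j
    unfolding W_def by (rule received_preimage_sets[OF plain_error_event_sets])
  have pointwise: "(\<Sum>r<L. indicator (codeword_error_event (q * L + r)) z) = (\<Sum>j<L. indicator (W j) z :: real)"
    if z: "z \<in> space N" for z
  proof -
    have "codeword (q * L + r) = c" "offset (q * L + r) (helper z) = nat ((int r + - int (helper z)) mod int L)"
      if "r < L" for r
      using that unfolding codeword_def offset_def c_def by auto
    then have "(\<Sum>r<L. indicator (codeword_error_event (q * L + r)) z)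
        = (\<Sum>r<L. indicator (W (nat ((int r + - int (helper z)) mod int L))) z :: real)"
      using z received_in_space
      unfolding codeword_error_event_def W_def plain_error_event_def received_encoder
      by (intro sum.cong) (auto simp: indicator_def)
    also have "\<dots> = (\<Sum>j<L. indicator (W j) z)"
      using L by (rule sum_lessThan_rotate)
    finally show ?thesis .
  qed
  have finite_N: "finite_measure N"
    using prob_space_noise by (rule prob_space.finite_measure)
  have "(\<Sum>r<L. measure N (codeword_error_event (q * L + r)))
      = (\<integral>z. (\<Sum>r<L. indicator (codeword_error_event (q * L + r)) z) \<partial>N)"
    by (rule sum_measure_eq_integral_indicator[OF finite_N]) (auto intro: codeword_error_event_sets)
  also have "\<dots> = (\<integral>z. (\<Sum>j<L. indicator (W j) z) \<partial>N)"
    using pointwise by (rule Bochner_Integration.integral_cong[OF refl])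
  also have "\<dots> = (\<Sum>j<L. measure N (W j))"
    by (rule sum_measure_eq_integral_indicator[OF finite_N, symmetric]) (auto intro: W_sets)
  finally show ?thesis
    unfolding W_def c_def .
qed

lemma sum_codeword_error_le:
  fixes G :: real
  assumes \<eta>: "0 \<le> \<eta>" and G: "\<And>c. c < K \<Longrightarrow> (\<Sum>i<n. \<bar>f c i\<bar>) \<le> G"
  shows "(\<Sum>m<M. measure N (codeword_error_event m))
    \<le> L * (\<Sum>c<K. measure N (plain_error_event c)) + K * L * ((\<eta> * G + \<Delta> * L) / sqrt s2)"
proof -
  define \<delta> where "\<delta> = (\<eta> * G + \<Delta> * L) / sqrt s2"
  have K: "0 < K"
    using set_size_pos by auto
  have perturbed_le: "measure N {z \<in> space N. received n (perturbation c j) z \<in> plain_error_event c}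
      \<le> measure N (plain_error_event c) + \<delta>" if "c < K" "j < L" for c j
  proof -
    have "\<eta> * (\<Sum>i<n. \<bar>f c i\<bar>) + \<Delta> * j \<le> \<eta> * G + \<Delta> * L"
      using that \<eta> \<Delta>_pos G by (intro add_mono mult_left_mono) auto
    then have "(\<eta> * (\<Sum>i<n. \<bar>f c i\<bar>) + \<Delta> * j) / sqrt s2 \<le> \<delta>"
      unfolding \<delta>_def by (rule divide_right_mono) (use s2_pos in simp)
    then show ?thesis
      using measure_perturbed_error_le[OF \<eta>, of c j] by linarith
  qed
  have "M \<le> K * L"
    using set_size_add_le[of n Rh "R - Rh"] by (simp add: mult.commute)
  then have "(\<Sum>m<M. measure N (codeword_error_event m)) \<le> (\<Sum>m<K * L. measure N (codeword_error_event m))"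
    by (intro sum_mono2) auto
  also have "\<dots> = (\<Sum>q<K. \<Sum>r<L. measure N (codeword_error_event (q * L + r)))"
    by (rule sum_lessThan_mult_split)
  also have "\<dots> \<le> (\<Sum>q<K. \<Sum>j<L. measure N (plain_error_event ((s + q) mod K)) + \<delta>)"
    unfolding sum_block_codeword_error using K by (intro sum_mono perturbed_le) auto
  also have "\<dots> = L * (\<Sum>q<K. measure N (plain_error_event (nat ((int q + int s) mod int K)))) + K * L * \<delta>"
    by (simp add: sum.distrib sum_distrib_left algebra_simps nat_mod_distrib nat_add_distrib)
  also have "(\<Sum>q<K. measure N (plain_error_event (nat ((int q + int s) mod int K))))
      = (\<Sum>c<K. measure N (plain_error_event c))"
    using K by (rule sum_lessThan_rotate)
  finally show ?thesis
    unfolding \<delta>_def .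
qed

lemma helped_error_scheme_le:
  fixes G :: real
  assumes "0 \<le> \<eta>" and "\<And>c. c < K \<Longrightarrow> (\<Sum>i<n. \<bar>f c i\<bar>) \<le> G"
  shows "helped_error n R s2 encoder decoder helper
    \<le> real (L * K) / M * (plain_error n (R - Rh) s2 f \<psi> + (\<eta> * G + \<Delta> * L) / sqrt s2)"
proof -
  interpret prob_space N
    by (rule prob_space_noise)
  have "measure N {z \<in> space N. decoder (received n (encoder m (helper z)) z) \<noteq> m}
      \<le> measure N (codeword_error_event m)" if "m < M" for m
    using decoder_correct[OF that] codeword_error_event_sets
    by (intro finite_measure_mono) (auto simp: codeword_error_event_def)
  then have "helped_error n R s2 encoder decoder helper \<le> (1 / M) * (\<Sum>m<M. measure N (codeword_error_event m))"
    unfolding helped_error_def by (intro mult_left_mono sum_mono) auto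
  also have "\<dots> \<le> (1 / M) * (L * (\<Sum>c<K. measure N (plain_error_event c)) + K * L * ((\<eta> * G + \<Delta> * L) / sqrt s2))"
    using sum_codeword_error_le[OF assms] by (intro mult_left_mono) auto
  also have "\<dots> = real (L * K) / M * (plain_error n (R - Rh) s2 f \<psi> + (\<eta> * G + \<Delta> * L) / sqrt s2)"
    using set_size_pos[of n "R - Rh"] set_size_pos[of n R]
    unfolding plain_error_def plain_error_event_def by (simp add: field_simps)
  finally show ?thesis .
qed

end

text \<open>A rotation \<open>s\<close> of the codebook keeps the power of the codewords actually used
  within that of the ordinary code, even when only part of the codebook is used.\<close>

lemma plain_code_rotation_power_le:
  fixes f :: "nat \<Rightarrow> nat \<Rightarrow> real" and P :: real and M :: nat and g :: "nat \<Rightarrow> nat"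
  assumes "plain_code n r P f \<psi>"
  shows "\<exists>s. (\<Sum>m<M. \<Sum>i<n. (f ((s + g m) mod set_size n r) i)\<^sup>2) \<le> M * (n * P)"
proof -
  define K where "K = set_size n r"
  have K: "0 < K"
    unfolding K_def by (rule set_size_pos)
  have power: "(1 / K) * (\<Sum>c<K. \<Sum>i<n. (f c i)\<^sup>2) \<le> n * P"
    using assms unfolding plain_code_def K_def by auto
  obtain s where "(\<Sum>m<M. \<Sum>i<n. (f ((s + g m) mod K) i)\<^sup>2) \<le> M / K * (\<Sum>c<K. \<Sum>i<n. (f c i)\<^sup>2)"
    using exists_rotation_sum_le[OF K, where p = "\<lambda>c. \<Sum>i<n. (f c i)\<^sup>2"] by blast
  also have "\<dots> \<le> M / K * (K * (n * P))"
    using power K by (intro mult_left_mono) (auto simp: field_simps)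
  also have "\<dots> = M * (n * P)"
    using K by simp
  finally show ?thesis
    unfolding K_def by blast
qed

lemma exists_small_dither_parameters:
  fixes A B G L \<gamma> :: real
  assumes A: "0 \<le> A" and B: "0 < B" and G: "0 \<le> G" and L: "0 < L" and \<gamma>: "0 < \<gamma>"
  shows "\<exists>\<eta> \<Delta> :: real. 0 \<le> \<eta> \<and> \<eta> \<le> 1 \<and> 0 < \<Delta> \<and> \<Delta> \<le> 1 \<and> \<Delta> * A \<le> \<eta> * B \<and> \<eta> * G + \<Delta> * L \<le> \<gamma>"
proof (intro exI conjI)
  define \<eta> where "\<eta> = min 1 (\<gamma> / (2 * (G + 1)))"
  define \<Delta> where "\<Delta> = min 1 (min (\<eta> * B / (A + 1)) (\<gamma> / (2 * L)))"
  show \<eta>_pos: "0 \<le> \<eta>" and "\<eta> \<le> 1"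
    unfolding \<eta>_def using \<gamma> G by auto
  show "0 < \<Delta>" and "\<Delta> \<le> 1"
    unfolding \<Delta>_def \<eta>_def using \<gamma> G A B L by auto
  have "\<Delta> * A \<le> \<eta> * B / (A + 1) * (A + 1)"
    unfolding \<Delta>_def using A \<open>0 < \<Delta>\<close> by (intro mult_mono) (auto simp: \<Delta>_def)
  also have "\<dots> = \<eta> * B"
    using A by simp
  finally show "\<Delta> * A \<le> \<eta> * B" .
  have "\<eta> * G \<le> \<gamma> / (2 * (G + 1)) * (G + 1)"
    unfolding \<eta>_def using G \<gamma> by (intro mult_mono) auto
  also have "\<dots> = \<gamma> / 2"
    using G by (simp add: field_simps add_nonneg_pos)
  finally have "\<eta> * G \<le> \<gamma> / 2" .
  moreover have "\<Delta> * L \<le> \<gamma> / (2 * L) * L"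
    unfolding \<Delta>_def using L by (intro mult_right_mono) auto
  ultimately show "\<eta> * G + \<Delta> * L \<le> \<gamma>"
    using L by simp
qed

lemma opt_helped_error_le_plain_error:
  assumes n: "0 < n" and s2: "0 < s2" and P: "0 < P"
    and code: "plain_code n (R - Rh) P f \<psi>" and \<beta>: "0 < \<beta>"
  shows "opt_helped_error n R Rh P s2
    \<le> real (set_size n Rh * set_size n (R - Rh)) / set_size n R * plain_error n (R - Rh) s2 f \<psi> + \<beta>"
proof -
  define K L M where "K = set_size n (R - Rh)" and "L = set_size n Rh" and "M = set_size n R"
  have K: "0 < K" and L: "0 < L" and M: "0 < M"
    unfolding K_def L_def M_def using set_size_pos by auto
  have \<psi>: "\<psi> \<in> measurable (vec_space n) (count_space UNIV)"
    using code unfolding plain_code_def by auto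
  obtain s where power: "(\<Sum>m<M. \<Sum>i<n. (f ((s + m div L) mod K) i)\<^sup>2) \<le> M * (n * P)"
    using plain_code_rotation_power_le[OF code, where M = M and g = "\<lambda>m. m div L"]
    unfolding K_def by blast
  define G where "G = (\<Sum>c<K. \<Sum>i<n. \<bar>f c i\<bar>)"
  have G_sum: "(\<Sum>i<n. \<bar>f c i\<bar>) \<le> G" if "c < K" for c
    unfolding G_def using that by (intro member_le_sum) (auto intro: sum_nonneg)
  have G_0: "\<bar>f c 0\<bar> \<le> G" if "c < K" for c
    using member_le_sum[of 0 "{..<n}" "\<lambda>i. \<bar>f c i\<bar>"] n G_sum[OF that] by simp
  obtain \<eta> \<Delta> :: real where \<eta>: "0 \<le> \<eta>" "\<eta> \<le> 1" and \<Delta>: "0 < \<Delta>" "\<Delta> \<le> 1"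
    and small_power: "\<Delta> * (2 * L * G + L\<^sup>2) \<le> \<eta> * (n * P)"
    and small_shift: "\<eta> * G + \<Delta> * L \<le> \<beta> * M * sqrt s2 / (L * K)"
    using exists_small_dither_parameters[of "2 * L * G + L\<^sup>2" "n * P" G L "\<beta> * M * sqrt s2 / (L * K)"]
      n P K L M \<beta> s2 by (auto simp: G_def sum_nonneg)
  interpret helper_scheme n s2 R Rh f \<psi> s \<eta> \<Delta>
    using n s2 \<Delta> \<psi> by unfold_locales
  have "helped_code n R Rh P s2 encoder decoder helper"
    using \<eta> \<Delta> G_0 small_power power unfolding K_def L_def M_def
    by (intro helped_code_scheme) (auto simp: codeword_def)
  then have "opt_helped_error n R Rh P s2 \<le> helped_error n R s2 encoder decoder helper"
    by (rule opt_helped_error_le_helped_error)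
  also have "\<dots> \<le> real (L * K) / M * (plain_error n (R - Rh) s2 f \<psi> + (\<eta> * G + \<Delta> * L) / sqrt s2)"
    using helped_error_scheme_le[OF \<eta>(1)] G_sum unfolding K_def L_def M_def by blast
  also have "\<dots> = real (L * K) / M * plain_error n (R - Rh) s2 f \<psi>
      + real (L * K) / M * ((\<eta> * G + \<Delta> * L) / sqrt s2)"
    by (rule distrib_left)
  also have "real (L * K) / M * ((\<eta> * G + \<Delta> * L) / sqrt s2) \<le> \<beta>"
  proof -
    have "(\<eta> * G + \<Delta> * L) / sqrt s2 \<le> \<beta> * M / (L * K)"
      using small_shift s2 by (simp add: pos_divide_le_eq)
    then have "real (L * K) / M * ((\<eta> * G + \<Delta> * L) / sqrt s2) \<le> real (L * K) / M * (\<beta> * M / (L * K))"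
      by (intro mult_left_mono) auto
    also have "\<dots> = \<beta>"
      using K L M by simp
    finally show ?thesis .
  qed
  finally show ?thesis
    unfolding K_def L_def M_def by (simp add: mult.commute)
qed

lemma opt_helped_error_eq_0:
  assumes n: "0 < n" and s2: "0 < s2" and P: "0 < P" and R: "R < Rh"
  shows "opt_helped_error n R Rh P s2 = 0"
proof -
  have K: "set_size n (R - Rh) = 1"
    using R by (intro set_size_nonpos) simp
  have code: "plain_code n (R - Rh) P (\<lambda>c i. 0) (\<lambda>y. 0)"
    unfolding plain_code_def K using P by simp
  have "plain_error n (R - Rh) s2 (\<lambda>c i. 0) (\<lambda>y. 0) = 0"
    unfolding plain_error_def K by simp
  then have "opt_helped_error n R Rh P s2 \<le> \<beta>" if "0 < \<beta>" for \<beta>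
    using opt_helped_error_le_plain_error[OF n s2 P code that] by simp
  then have "opt_helped_error n R Rh P s2 \<le> 0"
    by (rule field_le_epsilon[of _ 0, simplified])
  then show ?thesis
    using opt_helped_error_nonneg[of P n R Rh s2] P by simp
qed

lemma opt_helped_error_le_5:
  assumes n: "0 < n" and s2: "0 < s2" and P: "0 < P" and Rh: "0 \<le> Rh" "Rh \<le> R"
    and code: "plain_code n (R - Rh) P f \<psi>" and err: "plain_error n (R - Rh) s2 f \<psi> \<le> \<beta>"
    and \<beta>: "0 < \<beta>"
  shows "opt_helped_error n R Rh P s2 \<le> 5 * \<beta>"
proof -
  have "real (set_size n Rh * set_size n (R - Rh)) / set_size n R \<le> 4"
    using set_size_mult_le[of Rh "R - Rh" n] Rh set_size_pos[of n R]
    by (simp add: divide_le_eq)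
  then have "real (set_size n Rh * set_size n (R - Rh)) / set_size n R * plain_error n (R - Rh) s2 f \<psi>
      \<le> 4 * \<beta>"
    using err \<beta> plain_error_nonneg by (intro mult_mono) auto
  then show ?thesis
    using opt_helped_error_le_plain_error[OF n s2 P code \<beta>] by linarith
qed

section \<open>Reliability\<close>

definition error_exponent :: "nat \<Rightarrow> real \<Rightarrow> ereal" where
  "error_exponent n p = (if p = 0 then \<infinity> else ereal (- ln p / real n))"

lemma reliability_eq_limsup:
  "reliability R Rh P s2 = limsup (\<lambda>n. error_exponent n (opt_helped_error n R Rh P s2))"
  unfolding reliability_def error_exponent_def ..

lemma error_exponent_antimono:
  assumes "0 \<le> p" "p \<le> q" "0 < q"
  shows "error_exponent n q \<le> error_exponent n p"
proof (cases "p = 0")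
  case False
  then have "ln p \<le> ln q"
    using assms by simp
  then have "- ln q / real n \<le> - ln p / real n"
    by (intro divide_right_mono) auto
  then show ?thesis
    using False assms unfolding error_exponent_def by simp
qed (simp add: error_exponent_def)

lemma reliability_nonneg:
  assumes "0 < s2" "0 \<le> P"
  shows "0 \<le> reliability R Rh P s2"
proof -
  have "error_exponent n 1 \<le> error_exponent n (opt_helped_error n R Rh P s2)" for n
    using assms by (intro error_exponent_antimono opt_helped_error_nonneg opt_helped_error_le_1) auto
  then have "limsup (\<lambda>n. 0) \<le> reliability R Rh P s2"
    unfolding reliability_eq_limsup by (intro Limsup_mono) (auto simp: error_exponent_def zero_ereal_def)
  then show ?thesis
    by (simp add: Limsup_const)
qed

lemma reliability_eq_infinity:
  assumes "eventually (\<lambda>n. opt_helped_error n R Rh P s2 = 0) sequentially"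
  shows "reliability R Rh P s2 = \<infinity>"
proof -
  have "(\<lambda>n. error_exponent n (opt_helped_error n R Rh P s2)) \<longlonglongrightarrow> \<infinity>"
    using assms by (intro tendsto_eventually) (auto elim: eventually_mono simp: error_exponent_def)
  then show ?thesis
    unfolding reliability_eq_limsup by (intro lim_imp_Limsup) simp_all
qed

lemma reliability_ge:
  fixes E C :: real and \<epsilon> :: "nat \<Rightarrow> real"
  assumes P: "0 \<le> P" and C: "0 < C" and \<epsilon>: "\<epsilon> \<longlonglongrightarrow> 0"
    and bound: "\<And>n. 0 < n \<Longrightarrow> opt_helped_error n R Rh P s2 \<le> C * exp (- real n * (E - \<epsilon> n))"
  shows "ereal E \<le> reliability R Rh P s2"
proof -
  define b where "b n = ereal (E - \<epsilon> n - ln C / real n)" for n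
  have "b \<longlonglongrightarrow> ereal (E - 0 - 0)"
    unfolding b_def by (intro tendsto_intros \<epsilon> lim_const_over_n)
  then have "ereal E = limsup b"
    by (intro lim_imp_Limsup[symmetric]) simp_all
  also have "\<dots> \<le> reliability R Rh P s2"
    unfolding reliability_eq_limsup
  proof (intro Limsup_mono eventually_mono[OF eventually_gt_at_top[of 0]])
    fix n :: nat assume n: "0 < n"
    have "b n = error_exponent n (C * exp (- real n * (E - \<epsilon> n)))"
      unfolding b_def error_exponent_def using n C by (simp add: ln_mult field_simps)
    also have "\<dots> \<le> error_exponent n (opt_helped_error n R Rh P s2)"
      using P C n bound by (intro error_exponent_antimono opt_helped_error_nonneg) auto
    finally show "b n \<le> error_exponent n (opt_helped_error n R Rh P s2)" .
  qed
  finally show ?thesis .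
qed

theorem theorem1:
  fixes P s2 Rh R :: real and Ea :: "real \<Rightarrow> real"
  assumes "s2 > 0" and "P > 0" and "Rh > 0"
    and "achievable_exponent P s2 Ea"
  shows "(R < Rh \<longrightarrow> reliability R Rh P s2 = \<infinity>) \<and>
         (Rh < R \<and> R < Rh + awgn_capacity P s2 \<longrightarrow>
            reliability R Rh P s2 \<ge> ereal (Ea (R - Rh))) \<and>
         (R \<ge> Rh + awgn_capacity P s2 \<longrightarrow> reliability R Rh P s2 \<ge> 0)"
proof -
  note s2 = assms(1) and P = assms(2) and Rh = assms(3)
  have "reliability R Rh P s2 = \<infinity>" if "R < Rh"
    using opt_helped_error_eq_0[OF _ s2 P that]
    by (intro reliability_eq_infinity eventually_mono[OF eventually_gt_at_top[of 0]])
  moreover have "ereal (Ea (R - Rh)) \<le> reliability R Rh P s2" if R: "Rh < R"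
  proof -
    obtain \<epsilon> :: "nat \<Rightarrow> real" where \<epsilon>: "\<epsilon> \<longlonglongrightarrow> 0" and codes: "\<And>n. \<exists>f \<psi>. plain_code n (R - Rh) P f \<psi>
        \<and> plain_error n (R - Rh) s2 f \<psi> \<le> exp (- real n * (Ea (R - Rh) - \<epsilon> n))"
      using assms(4) unfolding achievable_exponent_def by blast
    have "opt_helped_error n R Rh P s2 \<le> 5 * exp (- real n * (Ea (R - Rh) - \<epsilon> n))" if "0 < n" for n
      using codes[of n] opt_helped_error_le_5[OF that s2 P] Rh R by auto
    then show ?thesis
      using P \<epsilon> by (intro reliability_ge[where C = 5]) auto
  qed
  moreover have "0 \<le> reliability R Rh P s2"
    using s2 P by (intro reliability_nonneg) auto
  ultimately show ?thesis
    by auto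
qed

end
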